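(* The assignment $\max:\underline{\mathrm{IN}}\to\underline{\mathrm{G}}$ sending an interval domain $(D,\mathrm{left},\mathrm{right})$ to $(\max(D),\le)$ and an arrow $f:D\to E$ to its restriction $f|_{\max(D)}:\max(D)\to\max(E)$ is a functor.
   Context: Order notions: directed/filtered sets, suprema $\bigsqcup$, infima $\bigwedge$, the way-below relation $x\ll y$ (for every directed $S$ with a supremum, $y\sqsubseteq\bigsqcup S$ implies $x\sqsubseteq s$ for some $s\in S$), $\Uparrow x=\{a:x\ll a\}$, $\Downarrow x=\{a:a\ll x\}$; a poset is continuous if some subset $B$ has $B\cap\Downarrow x$ containing a directed set with supremum $x$ for every $x$; a continuous dcpo additionally has suprema of all directed sets; $\max(D)$ is the set of maximal elements; the Scott topology consists of upper sets $U$ with $\bigsqcup S\in U\Rightarrow S\cap U\neq\emptyset$ for directed $S$. A continuous poset is bicontinuous if (1) $x\ll y$ iff for every filtered $S$ with an infimum, $\bigwedge S\sqsubseteq x$ implies $s\sqsubseteq y$ for some $s\in S$, and (2) each $\Uparrow x$ is filtered with infimum $x$; its interval topology has basis $\{z: a\ll z\ll b\}$. A globally hyperbolic poset is a bicontinuous poset $(X,\le)$ whose closed intervals $[a,b]=\{z:a\le z\le b\}$ are compact in the interval topology. $\underline{\mathrm{G}}$ is the category whose objects are globally hyperbolic posets and whose arrows are monotone maps continuous for the interval topologies. An interval poset is a poset $D$ with maps $\mathrm{left},\mathrm{right}:D\to\max(D)$ such that (writing $\sqcap$ for binary infimum, assumed to exist only where named) $x=\mathrm{left}(x)\sqcap\mathrm{right}(x)$;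 if $\mathrm{right}(x)=\mathrm{left}(y)$ then $\mathrm{left}(x\sqcap y)=\mathrm{left}(x)$, $\mathrm{right}(x\sqcap y)=\mathrm{right}(y)$; and for $p\in\max(D)$ with $x\sqsubseteq p$, $\mathrm{left}(\mathrm{left}(x)\sqcap p)=\mathrm{left}(x)$, $\mathrm{right}(\mathrm{left}(x)\sqcap p)=p$, $\mathrm{left}(p\sqcap\mathrm{right}(x))=p$, $\mathrm{right}(p\sqcap\mathrm{right}(x))=\mathrm{right}(x)$. Define $a\le b$ on $\max(D)$ iff $a=\mathrm{left}(z),b=\mathrm{right}(z)$ for some $z$; let $[p,\cdot]=\mathrm{left}^{-1}(p)$, $[\cdot,q]=\mathrm{right}^{-1}(q)$. An interval domain is an interval poset with $D$ a continuous dcpo such that: (i) if $p\in\Uparrow x\cap\max(D)$ then $\Uparrow(\mathrm{left}(x)\sqcap p)$ and $\Uparrow(p\sqcap\mathrm{right}(x))$ are nonempty; (ii) for each $x$, TFAE: $\Uparrow x\neq\emptyset$; for all $y\in[\mathrm{left}(x),\cdot]$ with $y\sqsubseteq x$, $y\ll\mathrm{right}(y)$ in the subposet $[\cdot,\mathrm{right}(y)]$; for all $y\in[\cdot,\mathrm{right}(x)]$ with $y\sqsubseteq x$, $y\ll\mathrm{left}(y)$ in the subposet $[\mathrm{left}(y),\cdot]$; (iii) for directed $S\subseteq[p,\cdot]$, $\mathrm{left}(\bigsqcup S)=p$ and $\mathrm{right}(\bigsqcup S)=\mathrm{right}(\bigsqcup T)$ for every directed $T\subseteq[q,\cdot]$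 with $\mathrm{right}(T)=\mathrm{right}(S)$, and dually for directed $S\subseteq[\cdot,q]$, $\mathrm{right}(\bigsqcup S)=q$ and $\mathrm{left}(\bigsqcup S)=\mathrm{left}(\bigsqcup T)$ for every directed $T\subseteq[\cdot,p]$ with $\mathrm{left}(T)=\mathrm{left}(S)$; (iv) each $\{y\in\max(D):x\sqsubseteq y\}$ is Scott compact. $\underline{\mathrm{IN}}$ is the category of interval domains with arrows the Scott continuous maps $f:D\to E$ satisfying $f\circ\mathrm{left}_D=\mathrm{left}_E\circ f$ and $f\circ\mathrm{right}_D=\mathrm{right}_E\circ f$. *)

theory Defs
  imports "HOL-Analysis.Analysis"
begin

text \<open>All posets are given by a carrier set X and a relation le (read only on X).\<close>

definition poset :: "'a set \<Rightarrow> ('a \<Rightarrow> 'a \<Rightarrow> bool) \<Rightarrow> bool" where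
  "poset X le \<longleftrightarrow> (\<forall>x\<in>X. le x x) \<and> (\<forall>x\<in>X. \<forall>y\<in>X. le x y \<and> le y x \<longrightarrow> x = y)
     \<and> (\<forall>x\<in>X. \<forall>y\<in>X. \<forall>z\<in>X. le x y \<and> le y z \<longrightarrow> le x z)"

definition directed :: "'a set \<Rightarrow> ('a \<Rightarrow> 'a \<Rightarrow> bool) \<Rightarrow> 'a set \<Rightarrow> bool" where
  "directed X le S \<longleftrightarrow> S \<subseteq> X \<and> S \<noteq> {} \<and> (\<forall>a\<in>S. \<forall>b\<in>S. \<exists>c\<in>S. le a c \<and> le b c)"

definition filtered :: "'a set \<Rightarrow> ('a \<Rightarrow> 'a \<Rightarrow> bool) \<Rightarrow> 'a set \<Rightarrow> bool" where
  "filtered X le S \<longleftrightarrow> S \<subseteq> X \<and> S \<noteq> {} \<and> (\<forall>a\<in>S. \<forall>b\<in>S. \<exists>c\<in>S. le c a \<and> le c b)"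

definition is_sup :: "'a set \<Rightarrow> ('a \<Rightarrow> 'a \<Rightarrow> bool) \<Rightarrow> 'a set \<Rightarrow> 'a \<Rightarrow> bool" where
  "is_sup X le S s \<longleftrightarrow> s \<in> X \<and> (\<forall>a\<in>S. le a s) \<and> (\<forall>u\<in>X. (\<forall>a\<in>S. le a u) \<longrightarrow> le s u)"

definition is_inf :: "'a set \<Rightarrow> ('a \<Rightarrow> 'a \<Rightarrow> bool) \<Rightarrow> 'a set \<Rightarrow> 'a \<Rightarrow> bool" where
  "is_inf X le S s \<longleftrightarrow> s \<in> X \<and> (\<forall>a\<in>S. le s a) \<and> (\<forall>u\<in>X. (\<forall>a\<in>S. le u a) \<longrightarrow> le u s)"

definition way_below :: "'a set \<Rightarrow> ('a \<Rightarrow> 'a \<Rightarrow> bool) \<Rightarrow> 'a \<Rightarrow> 'a \<Rightarrow> bool" where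
  "way_below X le x y \<longleftrightarrow> x \<in> X \<and> y \<in> X \<and>
     (\<forall>S s. directed X le S \<and> is_sup X le S s \<and> le y s \<longrightarrow> (\<exists>a\<in>S. le x a))"

definition wwup :: "'a set \<Rightarrow> ('a \<Rightarrow> 'a \<Rightarrow> bool) \<Rightarrow> 'a \<Rightarrow> 'a set" where
  "wwup X le x = {a\<in>X. way_below X le x a}"

definition wwdown :: "'a set \<Rightarrow> ('a \<Rightarrow> 'a \<Rightarrow> bool) \<Rightarrow> 'a \<Rightarrow> 'a set" where
  "wwdown X le x = {a\<in>X. way_below X le a x}"

definition continuous_poset :: "'a set \<Rightarrow> ('a \<Rightarrow> 'a \<Rightarrow> bool) \<Rightarrow> bool" where
  "continuous_poset X le \<longleftrightarrow> poset X le \<and>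
     (\<exists>B\<subseteq>X. \<forall>x\<in>X. \<exists>S\<subseteq>B \<inter> wwdown X le x. directed X le S \<and> is_sup X le S x)"

definition continuous_dcpo :: "'a set \<Rightarrow> ('a \<Rightarrow> 'a \<Rightarrow> bool) \<Rightarrow> bool" where
  "continuous_dcpo X le \<longleftrightarrow> continuous_poset X le \<and>
     (\<forall>S. directed X le S \<longrightarrow> (\<exists>s. is_sup X le S s))"

definition maxset :: "'a set \<Rightarrow> ('a \<Rightarrow> 'a \<Rightarrow> bool) \<Rightarrow> 'a set" where
  "maxset X le = {x\<in>X. \<forall>y\<in>X. le x y \<longrightarrow> y = x}"

definition scott_open :: "'a set \<Rightarrow> ('a \<Rightarrow> 'a \<Rightarrow> bool) \<Rightarrow> 'a set \<Rightarrow> bool" where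
  "scott_open X le U \<longleftrightarrow> U \<subseteq> X \<and> (\<forall>x\<in>U. \<forall>y\<in>X. le x y \<longrightarrow> y \<in> U) \<and>
     (\<forall>S s. directed X le S \<and> is_sup X le S s \<and> s \<in> U \<longrightarrow> S \<inter> U \<noteq> {})"

definition scott_compact :: "'a set \<Rightarrow> ('a \<Rightarrow> 'a \<Rightarrow> bool) \<Rightarrow> 'a set \<Rightarrow> bool" where
  "scott_compact X le K \<longleftrightarrow> K \<subseteq> X \<and>
     (\<forall>\<U>. (\<forall>U\<in>\<U>. scott_open X le U) \<and> K \<subseteq> \<Union>\<U> \<longrightarrow>
        (\<exists>\<F>\<subseteq>\<U>. finite \<F> \<and> K \<subseteq> \<Union>\<F>))"

definition bicontinuous :: "'a set \<Rightarrow> ('a \<Rightarrow> 'a \<Rightarrow> bool) \<Rightarrow> bool" where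
  "bicontinuous X le \<longleftrightarrow> continuous_poset X le \<and>
     (\<forall>x\<in>X. \<forall>y\<in>X. way_below X le x y \<longleftrightarrow>
        (\<forall>S i. filtered X le S \<and> is_inf X le S i \<and> le i x \<longrightarrow> (\<exists>s\<in>S. le s y))) \<and>
     (\<forall>x\<in>X. filtered X le (wwup X le x) \<and> is_inf X le (wwup X le x) x)"

definition interval_topology :: "'a set \<Rightarrow> ('a \<Rightarrow> 'a \<Rightarrow> bool) \<Rightarrow> 'a topology" where
  "interval_topology X le =
     topology_generated_by {wwup X le a \<inter> wwdown X le b | a b. a \<in> X \<and> b \<in> X}"

definition globally_hyperbolic :: "'a set \<Rightarrow> ('a \<Rightarrow> 'a \<Rightarrow> bool) \<Rightarrow> bool" where
  "globally_hyperbolic X le \<longleftrightarrow> bicontinuous X le \<and>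
     (\<forall>a\<in>X. \<forall>b\<in>X. compactin (interval_topology X le) {z\<in>X. le a z \<and> le z b})"

definition G_arrow :: "'a set \<Rightarrow> ('a \<Rightarrow> 'a \<Rightarrow> bool) \<Rightarrow> 'b set \<Rightarrow> ('b \<Rightarrow> 'b \<Rightarrow> bool) \<Rightarrow> ('a \<Rightarrow> 'b) \<Rightarrow> bool" where
  "G_arrow X le Y le' f \<longleftrightarrow> f \<in> X \<rightarrow> Y \<and>
     (\<forall>x\<in>X. \<forall>y\<in>X. le x y \<longrightarrow> le' (f x) (f y)) \<and>
     continuous_map (interval_topology X le) (interval_topology Y le') f"

text \<open>Interval posets. The binary infima occurring in the axioms are asserted to exist.\<close>
definition interval_poset :: "'a set \<Rightarrow> ('a \<Rightarrow> 'a \<Rightarrow> bool) \<Rightarrow> ('a \<Rightarrow> 'a) \<Rightarrow> ('a \<Rightarrow> 'a) \<Rightarrow> bool" where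
  "interval_poset D le l r \<longleftrightarrow> poset D le \<and>
     (\<forall>x\<in>D. l x \<in> maxset D le \<and> r x \<in> maxset D le) \<and>
     (\<forall>x\<in>D. is_inf D le {l x, r x} x) \<and>
     (\<forall>x\<in>D. \<forall>y\<in>D. r x = l y \<longrightarrow>
        (\<exists>z. is_inf D le {x, y} z \<and> l z = l x \<and> r z = r y)) \<and>
     (\<forall>x\<in>D. \<forall>p\<in>maxset D le. le x p \<longrightarrow>
        (\<exists>z. is_inf D le {l x, p} z \<and> l z = l x \<and> r z = p) \<and>
        (\<exists>z. is_inf D le {p, r x} z \<and> l z = p \<and> r z = r x))"

definition max_order :: "'a set \<Rightarrow> ('a \<Rightarrow> 'a) \<Rightarrow> ('a \<Rightarrow> 'a) \<Rightarrow> 'a \<Rightarrow> 'a \<Rightarrow> bool" where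
  "max_order D l r a b \<longleftrightarrow> (\<exists>z\<in>D. l z = a \<and> r z = b)"

definition interval_domain :: "'a set \<Rightarrow> ('a \<Rightarrow> 'a \<Rightarrow> bool) \<Rightarrow> ('a \<Rightarrow> 'a) \<Rightarrow> ('a \<Rightarrow> 'a) \<Rightarrow> bool" where
  "interval_domain D le l r \<longleftrightarrow> interval_poset D le l r \<and> continuous_dcpo D le \<and>
     \<comment> \<open>(i)\<close>
     (\<forall>x\<in>D. \<forall>p\<in>wwup D le x \<inter> maxset D le.
        (\<forall>z. is_inf D le {l x, p} z \<longrightarrow> wwup D le z \<noteq> {}) \<and>
        (\<forall>z. is_inf D le {p, r x} z \<longrightarrow> wwup D le z \<noteq> {})) \<and>
     \<comment> \<open>(ii)\<close>
     (\<forall>x\<in>D.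
        (wwup D le x \<noteq> {} \<longleftrightarrow>
          (\<forall>y\<in>D. l y = l x \<and> le y x \<longrightarrow> way_below {z\<in>D. r z = r y} le y (r y))) \<and>
        (wwup D le x \<noteq> {} \<longleftrightarrow>
          (\<forall>y\<in>D. r y = r x \<and> le y x \<longrightarrow> way_below {z\<in>D. l z = l y} le y (l y)))) \<and>
     \<comment> \<open>(iii)\<close>
     (\<forall>p\<in>maxset D le. \<forall>S s. directed D le S \<and> S \<subseteq> {z\<in>D. l z = p} \<and> is_sup D le S s \<longrightarrow>
        l s = p \<and>
        (\<forall>q\<in>maxset D le. \<forall>T t. directed D le T \<and> T \<subseteq> {z\<in>D. l z = q} \<and> is_sup D le T t
            \<and> r ` T = r ` S \<longrightarrow> r t = r s)) \<and>
     (\<forall>q\<in>maxset D le. \<forall>S s. directed D le S \<and> S \<subseteq> {z\<in>D. r z = q} \<and> is_sup D le S s \<longrightarrow>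
        r s = q \<and>
        (\<forall>p\<in>maxset D le. \<forall>T t. directed D le T \<and> T \<subseteq> {z\<in>D. r z = p} \<and> is_sup D le T t
            \<and> l ` T = l ` S \<longrightarrow> l t = l s)) \<and>
     \<comment> \<open>(iv)\<close>
     (\<forall>x\<in>D. scott_compact D le {y\<in>maxset D le. le x y})"

definition scott_continuous :: "'a set \<Rightarrow> ('a \<Rightarrow> 'a \<Rightarrow> bool) \<Rightarrow> 'b set \<Rightarrow> ('b \<Rightarrow> 'b \<Rightarrow> bool) \<Rightarrow> ('a \<Rightarrow> 'b) \<Rightarrow> bool" where
  "scott_continuous D le E le' f \<longleftrightarrow> f \<in> D \<rightarrow> E \<and>
     (\<forall>S s. directed D le S \<and> is_sup D le S s \<longrightarrow> is_sup E le' (f ` S) (f s))"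

definition IN_arrow :: "'a set \<Rightarrow> ('a \<Rightarrow> 'a \<Rightarrow> bool) \<Rightarrow> ('a \<Rightarrow> 'a) \<Rightarrow> ('a \<Rightarrow> 'a) \<Rightarrow>
    'b set \<Rightarrow> ('b \<Rightarrow> 'b \<Rightarrow> bool) \<Rightarrow> ('b \<Rightarrow> 'b) \<Rightarrow> ('b \<Rightarrow> 'b) \<Rightarrow> ('a \<Rightarrow> 'b) \<Rightarrow> bool" where
  "IN_arrow D le l r E le' l' r' f \<longleftrightarrow> scott_continuous D le E le' f \<and>
     (\<forall>x\<in>D. f (l x) = l' (f x) \<and> f (r x) = r' (f x))"

definition max_map :: "'a set \<Rightarrow> ('a \<Rightarrow> 'a \<Rightarrow> bool) \<Rightarrow> ('a \<Rightarrow> 'b) \<Rightarrow> ('a \<Rightarrow> 'b)" where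
  "max_map D le f = restrict f (maxset D le)"

end

theory Submission
  imports Defs
begin

(* An element x of an interval domain D is determined by its endpoints, and x \<sqsubseteq> y iff
   l x \<preceq> l y and r y \<preceq> r x, where \<preceq> is the order on max(D); so D is the poset of
   intervals [a, b] of max(D) under reverse inclusion. Axiom (iii) turns directed suprema in D
   into suprema of left and infima of right endpoints, axiom (ii) says that x has an element way
   above it iff l x \<lless> r x, and axiom (i) gives interpolation in max(D). Since the axioms are
   symmetric in l and r, the same holds for the converse order; comparing the two descriptions
   of "x has an element way above it" yields condition (1) of bicontinuity. The Scott topology
   of D, relativised to max(D), is the interval topology; so the interval [a, b] of max(D), being
   the set of maximal elements above the element of D with endpoints a and b, is compact by
   axiom (iv), and an arrow of interval domains restricts to a monotone map that is continuous
   for the relative Scott topologies. *)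

section \<open>Posets, the way-below relation and the Scott topology\<close>

lemma poset_refl: "poset X le \<Longrightarrow> x \<in> X \<Longrightarrow> le x x"
  unfolding poset_def by blast

lemma poset_antisym: "poset X le \<Longrightarrow> x \<in> X \<Longrightarrow> y \<in> X \<Longrightarrow> le x y \<Longrightarrow> le y x \<Longrightarrow> x = y"
  unfolding poset_def by blast

lemma poset_trans:
  "poset X le \<Longrightarrow> x \<in> X \<Longrightarrow> y \<in> X \<Longrightarrow> z \<in> X \<Longrightarrow> le x y \<Longrightarrow> le y z \<Longrightarrow> le x z"
  unfolding poset_def by blast

lemma poset_conversep [simp]: "poset X le\<inverse>\<inverse> \<longleftrightarrow> poset X le"
  unfolding poset_def conversep_iff by (intro conj_cong) blast+

lemma directed_conversep [simp]: "directed X le\<inverse>\<inverse> S \<longleftrightarrow> filtered X le S"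
  unfolding directed_def filtered_def by simp

lemma filtered_conversep [simp]: "filtered X le\<inverse>\<inverse> S \<longleftrightarrow> directed X le S"
  unfolding directed_def filtered_def by simp

lemma is_sup_conversep [simp]: "is_sup X le\<inverse>\<inverse> S s \<longleftrightarrow> is_inf X le S s"
  unfolding is_sup_def is_inf_def by simp

lemma is_inf_conversep [simp]: "is_inf X le\<inverse>\<inverse> S s \<longleftrightarrow> is_sup X le S s"
  unfolding is_sup_def is_inf_def by simp

lemma way_below_conversep:
  "way_below X le\<inverse>\<inverse> y x \<longleftrightarrow> x \<in> X \<and> y \<in> X \<and>
     (\<forall>S i. filtered X le S \<and> is_inf X le S i \<and> le i x \<longrightarrow> (\<exists>s\<in>S. le s y))"
  unfolding way_below_def by (simp only: directed_conversep is_sup_conversep conversep_iff) blast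

lemma is_sup_in: "is_sup X le S s \<Longrightarrow> s \<in> X"
  unfolding is_sup_def by (elim conjE)

lemma is_inf_in: "is_inf X le S s \<Longrightarrow> s \<in> X"
  unfolding is_inf_def by (elim conjE)

lemma is_sup_unique:
  assumes "poset X le" "is_sup X le S a" "is_sup X le S b" shows "a = b"
proof -
  have "le a b" "le b a" "a \<in> X" "b \<in> X" using assms(2,3) unfolding is_sup_def by auto
  then show ?thesis using poset_antisym[OF assms(1)] by blast
qed

lemma is_inf_unique:
  assumes "poset X le" "is_inf X le S a" "is_inf X le S b" shows "a = b"
  using is_sup_unique[of X "le\<inverse>\<inverse>"] assms by simp

lemma directed_singleton: "poset X le \<Longrightarrow> x \<in> X \<Longrightarrow> directed X le {x}"
  unfolding directed_def by (auto intro: poset_refl)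

lemma is_sup_singleton: "poset X le \<Longrightarrow> x \<in> X \<Longrightarrow> is_sup X le {x} x"
  unfolding is_sup_def by (auto intro: poset_refl)

lemma way_below_imp_le: assumes "poset X le" "way_below X le x y" shows "le x y"
proof -
  have y: "y \<in> X" using assms(2) unfolding way_below_def by blast
  have "directed X le {y}" "is_sup X le {y} y" "le y y"
    using assms(1) y by (simp_all add: directed_singleton is_sup_singleton poset_refl)
  then have "\<exists>a\<in>{y}. le x a" using assms(2) unfolding way_below_def by blast
  then show ?thesis by simp
qed

lemma way_below_le_trans:
  assumes "poset X le" "way_below X le x y" "le y z" "z \<in> X"
  shows "way_below X le x z"
  unfolding way_below_def
proof (intro conjI allI impI)
  show "x \<in> X" "z \<in> X" using assms(2,4) unfolding way_below_def by blast+
  fix S s assume S: "directed X le S \<and> is_sup X le S s \<and> le z s"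
  then have "le y s"
    using assms poset_trans[OF assms(1), of y z s] unfolding way_below_def is_sup_def by blast
  then show "\<exists>a\<in>S. le x a" using S assms(2) unfolding way_below_def by blast
qed

lemma directed_image:
  assumes "directed X le S" "f ` S \<subseteq> Y" "\<And>x y. x \<in> S \<Longrightarrow> y \<in> S \<Longrightarrow> le x y \<Longrightarrow> le' (f x) (f y)"
  shows "directed Y le' (f ` S)"
  unfolding directed_def
proof (intro conjI ballI)
  show "f ` S \<subseteq> Y" "f ` S \<noteq> {}" using assms(1,2) unfolding directed_def by auto
  fix a b assume "a \<in> f ` S" "b \<in> f ` S"
  then obtain x y where "x \<in> S" "y \<in> S" "a = f x" "b = f y" by blast
  moreover obtain z where "z \<in> S" "le x z" "le y z"
    using assms(1) \<open>x \<in> S\<close> \<open>y \<in> S\<close> unfolding directed_def by blast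
  ultimately show "\<exists>c\<in>f ` S. le' a c \<and> le' b c" using assms(3) by blast
qed

lemma directed_mono_carrier: "directed X le S \<Longrightarrow> X \<subseteq> Y \<Longrightarrow> directed Y le S"
  unfolding directed_def by blast

definition scott_topology :: "'a set \<Rightarrow> ('a \<Rightarrow> 'a \<Rightarrow> bool) \<Rightarrow> 'a topology" where
  "scott_topology X le = topology (scott_open X le)"

lemma scott_open_Int:
  assumes U: "scott_open X le U" and V: "scott_open X le V"
  shows "scott_open X le (U \<inter> V)"
  unfolding scott_open_def
proof (intro conjI ballI allI impI)
  show "U \<inter> V \<subseteq> X" using U unfolding scott_open_def by blast
  show "y \<in> U \<inter> V" if "x \<in> U \<inter> V" "y \<in> X" "le x y" for x y
    using that U V unfolding scott_open_def by blast
  fix S s assume S: "directed X le S \<and> is_sup X le S s \<and> s \<in> U \<inter> V"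
  obtain a b where ab: "a \<in> S" "a \<in> U" "b \<in> S" "b \<in> V"
    using S U V unfolding scott_open_def by blast
  then obtain c where c: "c \<in> S" "le a c" "le b c" "c \<in> X"
    using S unfolding directed_def by blast
  have "c \<in> U" "c \<in> V" using U V ab c unfolding scott_open_def by blast+
  with c show "S \<inter> (U \<inter> V) \<noteq> {}" by blast
qed

lemma istopology_scott_open: "istopology (scott_open X le)"
  unfolding istopology_def
proof (intro conjI allI impI)
  show "scott_open X le (U \<inter> V)" if "scott_open X le U" "scott_open X le V" for U V
    using that by (rule scott_open_Int)
  fix \<U> assume open_\<U>: "\<forall>U\<in>\<U>. scott_open X le U"
  show "scott_open X le (\<Union>\<U>)"
    unfolding scott_open_def
  proof (intro conjI ballI allI impI)
    show "\<Union>\<U> \<subseteq> X" using open_\<U> unfolding scott_open_def by blast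
    show "y \<in> \<Union>\<U>" if "x \<in> \<Union>\<U>" "y \<in> X" "le x y" for x y
      using that open_\<U> unfolding scott_open_def by blast
    fix S s assume S: "directed X le S \<and> is_sup X le S s \<and> s \<in> \<Union>\<U>"
    then obtain U where "U \<in> \<U>" "s \<in> U" by blast
    then have "S \<inter> U \<noteq> {}" using S open_\<U> unfolding scott_open_def by blast
    with \<open>U \<in> \<U>\<close> show "S \<inter> \<Union>\<U> \<noteq> {}" by blast
  qed
qed

lemma openin_scott_topology [simp]: "openin (scott_topology X le) = scott_open X le"
  by (simp add: scott_topology_def istopology_scott_open)

lemma topspace_scott_topology [simp]: "topspace (scott_topology X le) = X"
proof -
  have "scott_open X le X"
    unfolding scott_open_def directed_def by blast
  then show ?thesis
    unfolding topspace_def by (auto simp: scott_open_def)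
qed

lemma compactin_scott_topology_iff: "compactin (scott_topology X le) K \<longleftrightarrow> scott_compact X le K"
  unfolding compactin_def scott_compact_def openin_scott_topology topspace_scott_topology
  by (intro conj_cong all_cong imp_cong ex_cong) auto

lemma scott_continuous_mono:
  assumes "poset D le" "scott_continuous D le E le' f" "x \<in> D" "y \<in> D" "le x y"
  shows "le' (f x) (f y)"
proof -
  have "directed D le {x, y}" "is_sup D le {x, y} y"
    using assms unfolding directed_def is_sup_def by (auto intro: poset_refl)
  then show ?thesis
    using assms(2) unfolding scott_continuous_def is_sup_def by blast
qed

lemma scott_open_vimage:
  assumes "poset D le" "scott_continuous D le E le' f" "scott_open E le' U"
  shows "scott_open D le {x \<in> D. f x \<in> U}"
  unfolding scott_open_def
proof (intro conjI ballI allI impI)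
  have f: "f \<in> D \<rightarrow> E" using assms(2) unfolding scott_continuous_def by blast
  show "{x \<in> D. f x \<in> U} \<subseteq> D" by blast
  show "y \<in> {x \<in> D. f x \<in> U}" if "x \<in> {x \<in> D. f x \<in> U}" "y \<in> D" "le x y" for x y
    using that assms f scott_continuous_mono[OF assms(1,2)] unfolding scott_open_def by blast
  fix S s assume S: "directed D le S \<and> is_sup D le S s \<and> s \<in> {x \<in> D. f x \<in> U}"
  have "S \<subseteq> D" using S unfolding directed_def by blast
  then have "directed E le' (f ` S)"
    using S f scott_continuous_mono[OF assms(1,2)] directed_image[of D le S f E le'] by blast
  moreover have "is_sup E le' (f ` S) (f s)"
    using S assms(2) unfolding scott_continuous_def by blast
  ultimately have "f ` S \<inter> U \<noteq> {}"
    using S assms(3) unfolding scott_open_def by blast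
  then show "S \<inter> {x \<in> D. f x \<in> U} \<noteq> {}"
    using S unfolding directed_def by blast
qed

lemma continuous_map_scott_topology:
  assumes "poset D le" "scott_continuous D le E le' f"
  shows "continuous_map (scott_topology D le) (scott_topology E le') f"
proof -
  have "f \<in> D \<rightarrow> E" using assms(2) unfolding scott_continuous_def by blast
  then show ?thesis
    unfolding continuous_map_def using scott_open_vimage[OF assms] by simp
qed

lemma scott_open_wwup:
  assumes "poset X le" and interpolate: "\<And>b. way_below X le c b \<Longrightarrow> \<exists>e. way_below X le c e \<and> way_below X le e b"
  shows "scott_open X le (wwup X le c)"
  unfolding scott_open_def
proof (intro conjI ballI allI impI)
  show "wwup X le c \<subseteq> X" unfolding wwup_def by blast
  show "y \<in> wwup X le c" if "x \<in> wwup X le c" "y \<in> X" "le x y" for x y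
    using that way_below_le_trans[OF assms(1)] unfolding wwup_def by blast
  fix S s assume S: "directed X le S \<and> is_sup X le S s \<and> s \<in> wwup X le c"
  then obtain e where e: "way_below X le c e" "way_below X le e s"
    using interpolate unfolding wwup_def by blast
  then obtain x where "x \<in> S" "le e x"
    using S assms(1) poset_refl unfolding way_below_def is_sup_def by blast
  moreover have "S \<subseteq> X" using S unfolding directed_def by blast
  ultimately show "S \<inter> wwup X le c \<noteq> {}"
    using e way_below_le_trans[OF assms(1)] unfolding wwup_def by blast
qed

section \<open>Interval domains and the order on their maximal elements\<close>

lemma interval_poset_swap:
  assumes "interval_poset D le l r"
  shows "interval_poset D le r l"
proof -
  note P = assms[unfolded interval_poset_def]
  note concat = P[THEN conjunct2, THEN conjunct2, THEN conjunct2, THEN conjunct1, rule_format]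
  note split = P[THEN conjunct2, THEN conjunct2, THEN conjunct2, THEN conjunct2, rule_format]
  show ?thesis unfolding interval_poset_def
  proof (intro conjI ballI impI)
    show "poset D le" using P by (elim conjE)
    fix x assume x: "x \<in> D"
    show "r x \<in> maxset D le" "l x \<in> maxset D le" using P x by simp_all
    show "is_inf D le {r x, l x} x" using P x by (simp add: insert_commute)
    fix y assume "y \<in> D" "l x = r y"
    then obtain z where "is_inf D le {y, x} z" "l z = l y" "r z = r x"
      using concat[of y x] x by metis
    then show "\<exists>z. is_inf D le {x, y} z \<and> r z = r x \<and> l z = l y"
      by (auto simp: insert_commute)
  next
    fix x p assume "x \<in> D" "p \<in> maxset D le" "le x p"
    then obtain z z' where "is_inf D le {l x, p} z" "l z = l x" "r z = p"
      and "is_inf D le {p, r x} z'" "l z' = p" "r z' = r x"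
      using split[of x p] by metis
    then show "\<exists>z. is_inf D le {r x, p} z \<and> r z = r x \<and> l z = p"
      and "\<exists>z. is_inf D le {p, l x} z \<and> r z = p \<and> l z = l x"
      by (auto simp: insert_commute)
  qed
qed

lemma interval_domain_swap:
  assumes "interval_domain D le l r"
  shows "interval_domain D le r l"
proof -
  note ID = assms[unfolded interval_domain_def]
  have swap: "interval_poset D le r l" using ID by (elim conjE) (rule interval_poset_swap)
  have i: "\<forall>x\<in>D. \<forall>p\<in>wwup D le x \<inter> maxset D le.
        (\<forall>z. is_inf D le {r x, p} z \<longrightarrow> wwup D le z \<noteq> {}) \<and>
        (\<forall>z. is_inf D le {p, l x} z \<longrightarrow> wwup D le z \<noteq> {})"
  proof (intro ballI conjI allI impI)
    fix x p z assume "x \<in> D" "p \<in> wwup D le x \<inter> maxset D le"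
    then have "(\<forall>z. is_inf D le {l x, p} z \<longrightarrow> wwup D le z \<noteq> {}) \<and>
        (\<forall>z. is_inf D le {p, r x} z \<longrightarrow> wwup D le z \<noteq> {})"
      using ID[THEN conjunct2, THEN conjunct2, THEN conjunct1, rule_format] by blast
    then show "is_inf D le {r x, p} z \<Longrightarrow> wwup D le z \<noteq> {}"
      and "is_inf D le {p, l x} z \<Longrightarrow> wwup D le z \<noteq> {}"
      by (simp_all add: insert_commute)
  qed
  show ?thesis
    unfolding interval_domain_def ball_conj_distrib
    using ID[unfolded ball_conj_distrib] swap i[unfolded ball_conj_distrib]
    by (elim conjE) (intro conjI; assumption)
qed

locale interval_dom =
  fixes D :: "'a set" and le :: "'a \<Rightarrow> 'a \<Rightarrow> bool" (infix "\<sqsubseteq>" 50) and l r :: "'a \<Rightarrow> 'a"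
  assumes interval_domain: "interval_domain D (\<sqsubseteq>) l r"

(* Exchanging l and r gives again an interval domain, whose order on max(D) is the converse
   one (max_order_swap). A fact proved in a context block becomes available for this dual
   instance only after that block is closed, which is why the development below is split
   into several blocks. *)

sublocale interval_dom \<subseteq> dual: interval_dom D "(\<sqsubseteq>)" r l
  by unfold_locales (rule interval_domain_swap[OF interval_domain])

context interval_dom
begin

abbreviation M :: "'a set" where "M \<equiv> maxset D (\<sqsubseteq>)"

abbreviation max_le :: "'a \<Rightarrow> 'a \<Rightarrow> bool" (infix "\<preceq>" 50) where
  "a \<preceq> b \<equiv> max_order D l r a b"

lemma max_order_swap: "max_order D r l = (\<preceq>)\<inverse>\<inverse>"
  unfolding max_order_def conversep_iff by (intro ext) blast

lemmas interval_poset =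
  interval_domain[unfolded interval_domain_def, THEN conjunct1, unfolded interval_poset_def]

lemma poset: "poset D (\<sqsubseteq>)"
  using interval_poset by (rule conjunct1)

lemma dcpo_has_sup: "directed D (\<sqsubseteq>) S \<Longrightarrow> \<exists>s. is_sup D (\<sqsubseteq>) S s"
  using interval_domain[unfolded interval_domain_def, THEN conjunct2, THEN conjunct1]
  unfolding continuous_dcpo_def by blast

lemma continuous_approx:
  assumes "x \<in> D"
  shows "\<exists>S. directed D (\<sqsubseteq>) S \<and> is_sup D (\<sqsubseteq>) S x \<and> (\<forall>s\<in>S. way_below D (\<sqsubseteq>) s x)"
proof -
  have "continuous_poset D (\<sqsubseteq>)"
    using interval_domain unfolding interval_domain_def continuous_dcpo_def by (elim conjE)
  then obtain S where "S \<subseteq> wwdown D (\<sqsubseteq>) x" "directed D (\<sqsubseteq>) S" "is_sup D (\<sqsubseteq>) S x"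
    using assms unfolding continuous_poset_def by blast
  then show ?thesis unfolding wwdown_def by blast
qed

lemma max_subset: "M \<subseteq> D"
  unfolding maxset_def by blast

lemma maxsetD: "p \<in> M \<Longrightarrow> y \<in> D \<Longrightarrow> p \<sqsubseteq> y \<Longrightarrow> y = p"
  unfolding maxset_def by blast

lemma l_in_max: "x \<in> D \<Longrightarrow> l x \<in> M"
  using interval_poset[THEN conjunct2, THEN conjunct1] by blast

lemma is_inf_endpoints: "x \<in> D \<Longrightarrow> is_inf D (\<sqsubseteq>) {l x, r x} x"
  using interval_poset[THEN conjunct2, THEN conjunct2, THEN conjunct1] by blast

lemma le_l: "x \<in> D \<Longrightarrow> x \<sqsubseteq> l x"
  using is_inf_endpoints unfolding is_inf_def by blast

lemma l_max: "p \<in> M \<Longrightarrow> l p = p"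
  using maxsetD[of p "l p"] le_l[of p] l_in_max[of p] max_subset by blast

lemma endpoints_inject:
  assumes "x \<in> D" "y \<in> D" "l x = l y" "r x = r y"
  shows "x = y"
proof -
  have "is_inf D (\<sqsubseteq>) {l x, r x} y" using is_inf_endpoints[OF assms(2)] assms(3,4) by simp
  then show ?thesis using is_inf_unique[OF poset is_inf_endpoints[OF assms(1)]] by simp
qed

lemma concat:
  "x \<in> D \<Longrightarrow> y \<in> D \<Longrightarrow> r x = l y \<Longrightarrow> \<exists>z. is_inf D (\<sqsubseteq>) {x, y} z \<and> l z = l x \<and> r z = r y"
  using interval_poset[THEN conjunct2, THEN conjunct2, THEN conjunct2, THEN conjunct1] by blast

lemma max_orderI: "x \<in> D \<Longrightarrow> l x \<preceq> r x"
  unfolding max_order_def by blast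

lemma l_le_of_le_max:
  assumes "x \<in> D" "p \<in> M" "x \<sqsubseteq> p"
  shows "l x \<preceq> p"
proof -
  have "\<exists>z. is_inf D (\<sqsubseteq>) {l x, p} z \<and> l z = l x \<and> r z = p"
    using interval_poset[THEN conjunct2, THEN conjunct2, THEN conjunct2, THEN conjunct2,
        rule_format, OF assms]
    by (rule conjunct1)
  then obtain z where "is_inf D (\<sqsubseteq>) {l x, p} z" "l z = l x" "r z = p"
    by blast
  moreover have "z \<in> D" using is_inf_in \<open>is_inf D (\<sqsubseteq>) {l x, p} z\<close> .
  ultimately show ?thesis unfolding max_order_def by blast
qed

lemma sup_in_left_fibre:
  assumes "p \<in> M" "directed D (\<sqsubseteq>) S" "S \<subseteq> {z\<in>D. l z = p}" "is_sup D (\<sqsubseteq>) S s"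
  shows "l s = p \<and> (\<forall>q\<in>M. \<forall>T t. directed D (\<sqsubseteq>) T \<and> T \<subseteq> {z\<in>D. l z = q} \<and>
      is_sup D (\<sqsubseteq>) T t \<and> r ` T = r ` S \<longrightarrow> r t = r s)"
proof -
  have "\<forall>p\<in>M. \<forall>S s. directed D (\<sqsubseteq>) S \<and> S \<subseteq> {z\<in>D. l z = p} \<and> is_sup D (\<sqsubseteq>) S s \<longrightarrow>
      l s = p \<and> (\<forall>q\<in>M. \<forall>T t. directed D (\<sqsubseteq>) T \<and> T \<subseteq> {z\<in>D. l z = q} \<and>
      is_sup D (\<sqsubseteq>) T t \<and> r ` T = r ` S \<longrightarrow> r t = r s)"
    using interval_domain unfolding interval_domain_def by (elim conjE) assumption
  from this[rule_format, OF assms(1) conjI[OF assms(2) conjI[OF assms(3,4)]]] show ?thesis .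
qed

lemma wwup_nonempty_iff_right_fibres:
  assumes "x \<in> D"
  shows "wwup D (\<sqsubseteq>) x \<noteq> {} \<longleftrightarrow>
    (\<forall>y\<in>D. l y = l x \<and> y \<sqsubseteq> x \<longrightarrow> way_below {z\<in>D. r z = r y} (\<sqsubseteq>) y (r y))"
proof -
  have "\<forall>x\<in>D.
      (wwup D (\<sqsubseteq>) x \<noteq> {} \<longleftrightarrow>
        (\<forall>y\<in>D. l y = l x \<and> y \<sqsubseteq> x \<longrightarrow> way_below {z\<in>D. r z = r y} (\<sqsubseteq>) y (r y))) \<and>
      (wwup D (\<sqsubseteq>) x \<noteq> {} \<longleftrightarrow>
        (\<forall>y\<in>D. r y = r x \<and> y \<sqsubseteq> x \<longrightarrow> way_below {z\<in>D. l z = l y} (\<sqsubseteq>) y (l y)))"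
    using interval_domain unfolding interval_domain_def by (elim conjE) assumption
  from this[rule_format, OF assms] show ?thesis by (rule conjunct1)
qed

lemma wwup_nonempty_of_split:
  assumes "x \<in> D" "p \<in> wwup D (\<sqsubseteq>) x \<inter> M" "is_inf D (\<sqsubseteq>) {l x, p} z"
  shows "wwup D (\<sqsubseteq>) z \<noteq> {}"
proof -
  have "\<forall>x\<in>D. \<forall>p\<in>wwup D (\<sqsubseteq>) x \<inter> M.
        (\<forall>z. is_inf D (\<sqsubseteq>) {l x, p} z \<longrightarrow> wwup D (\<sqsubseteq>) z \<noteq> {}) \<and>
        (\<forall>z. is_inf D (\<sqsubseteq>) {p, r x} z \<longrightarrow> wwup D (\<sqsubseteq>) z \<noteq> {})"
    using interval_domain unfolding interval_domain_def by (elim conjE) assumption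
  from this[rule_format, OF assms(1,2), THEN conjunct1, rule_format, OF assms(3)] show ?thesis .
qed

lemma scott_compact_above:
  "x \<in> D \<Longrightarrow> scott_compact D (\<sqsubseteq>) {y\<in>M. x \<sqsubseteq> y}"
  using interval_domain unfolding interval_domain_def by (elim conjE) (rule bspec)

end

context interval_dom
begin

lemma max_order_refl: "a \<in> M \<Longrightarrow> a \<preceq> a"
  unfolding max_order_def using max_subset l_max dual.l_max by blast

lemma max_order_trans:
  assumes "a \<preceq> b" "b \<preceq> c" shows "a \<preceq> c"
proof -
  obtain u v where "u \<in> D" "l u = a" "r u = b" "v \<in> D" "l v = b" "r v = c"
    using assms unfolding max_order_def by blast
  then obtain w where "is_inf D (\<sqsubseteq>) {u, v} w" "l w = a" "r w = c"
    using concat by metis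
  then show ?thesis unfolding max_order_def is_inf_def by blast
qed

lemma max_order_antisym:
  assumes "a \<preceq> b" "b \<preceq> a" shows "a = b"
proof -
  obtain u v where u: "u \<in> D" "l u = a" "r u = b" and v: "v \<in> D" "l v = b" "r v = a"
    using assms unfolding max_order_def by blast
  have "is_inf D (\<sqsubseteq>) {l u, r u} v"
    using is_inf_endpoints[OF v(1)] u v by (simp add: insert_commute)
  then have "u = v" using is_inf_unique[OF poset is_inf_endpoints[OF u(1)]] by simp
  then show ?thesis using u v by simp
qed

lemma max_order_in_max: "a \<preceq> b \<Longrightarrow> a \<in> M \<and> b \<in> M"
  unfolding max_order_def using l_in_max dual.l_in_max by blast

lemma poset_max_order: "poset M (\<preceq>)"
  unfolding poset_def using max_order_refl max_order_antisym max_order_trans by blast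

lemma le_r_of_le_max: "x \<in> D \<Longrightarrow> p \<in> M \<Longrightarrow> x \<sqsubseteq> p \<Longrightarrow> p \<preceq> r x"
  using dual.l_le_of_le_max unfolding max_order_swap by simp

lemma le_iff_endpoints:
  assumes x: "x \<in> D" and y: "y \<in> D"
  shows "x \<sqsubseteq> y \<longleftrightarrow> l x \<preceq> l y \<and> r y \<preceq> r x"
proof
  assume "x \<sqsubseteq> y"
  then have "x \<sqsubseteq> l y" "x \<sqsubseteq> r y"
    using poset_trans[OF poset] le_l[OF y] dual.le_l[OF y] x y l_in_max dual.l_in_max max_subset
    by blast+
  then show "l x \<preceq> l y \<and> r y \<preceq> r x"
    using l_le_of_le_max le_r_of_le_max x y l_in_max dual.l_in_max by blast
next
  assume "l x \<preceq> l y \<and> r y \<preceq> r x"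
  then obtain u v where u: "u \<in> D" "l u = l x" "r u = l y" and v: "v \<in> D" "l v = r y" "r v = r x"
    unfolding max_order_def by blast
  obtain w where w: "is_inf D (\<sqsubseteq>) {u, y} w" "l w = l x" "r w = r y"
    using concat[OF u(1) y u(3)] u by auto
  have wD: "w \<in> D" using w unfolding is_inf_def by blast
  obtain w' where w': "is_inf D (\<sqsubseteq>) {w, v} w'" "l w' = l x" "r w' = r x"
    using concat[OF wD v(1)] w v by auto
  have "w' = x" using endpoints_inject[OF _ x] w' unfolding is_inf_def by blast
  moreover have "w' \<sqsubseteq> w" "w \<sqsubseteq> y" using w w' unfolding is_inf_def by auto
  ultimately show "x \<sqsubseteq> y" using poset_trans[OF poset] wD x y by blast
qed

lemma le_max_iff: "x \<in> D \<Longrightarrow> p \<in> M \<Longrightarrow> x \<sqsubseteq> p \<longleftrightarrow> l x \<preceq> p \<and> p \<preceq> r x"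
  using le_iff_endpoints[of x p] max_subset l_max dual.l_max by auto

(* The element with endpoints a and b (unique by endpoints_inject); unspecified unless a \<preceq> b. *)

definition ival :: "'a \<Rightarrow> 'a \<Rightarrow> 'a" where
  "ival a b = (SOME z. z \<in> D \<and> l z = a \<and> r z = b)"

lemma ival: "a \<preceq> b \<Longrightarrow> ival a b \<in> D \<and> l (ival a b) = a \<and> r (ival a b) = b"
  unfolding ival_def max_order_def by (rule someI_ex) blast

lemma ival_endpoints: "x \<in> D \<Longrightarrow> ival (l x) (r x) = x"
  using ival[OF max_orderI] endpoints_inject by blast

lemma ival_le_iff: "a \<preceq> b \<Longrightarrow> c \<preceq> d \<Longrightarrow> ival a b \<sqsubseteq> ival c d \<longleftrightarrow> a \<preceq> c \<and> d \<preceq> b"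
  using le_iff_endpoints[of "ival a b" "ival c d"] ival[of a b] ival[of c d] by simp

lemma ival_le_max_iff: "a \<preceq> b \<Longrightarrow> p \<in> M \<Longrightarrow> ival a b \<sqsubseteq> p \<longleftrightarrow> a \<preceq> p \<and> p \<preceq> b"
  using le_max_iff[of "ival a b" p] ival[of a b] by simp

lemma directed_l_image:
  assumes S: "directed D (\<sqsubseteq>) S"
  shows "directed M (\<preceq>) (l ` S)"
proof (rule directed_image[OF S])
  have "S \<subseteq> D" using S unfolding directed_def by blast
  then show "l ` S \<subseteq> M" using l_in_max by blast
  show "l x \<preceq> l y" if "x \<in> S" "y \<in> S" "x \<sqsubseteq> y" for x y
    using that \<open>S \<subseteq> D\<close> le_iff_endpoints[of x y] by (metis subsetD)
qed

lemma l_le_r_of_directed: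
  assumes "directed D (\<sqsubseteq>) S" "x \<in> S" "y \<in> S"
  shows "l x \<preceq> r y"
proof -
  obtain z where z: "z \<in> S" "x \<sqsubseteq> z" "y \<sqsubseteq> z" using assms unfolding directed_def by blast
  have "S \<subseteq> D" using assms(1) unfolding directed_def by blast
  then have "l x \<preceq> l z" "l z \<preceq> r z" "r z \<preceq> r y"
    using le_iff_endpoints[of x z] le_iff_endpoints[of y z] z assms max_orderI by (simp_all add: subset_iff)
  then show ?thesis using max_order_trans by blast
qed

lemma left_fibre_ival_image:
  assumes R: "filtered M (\<preceq>) R" and p: "\<forall>x\<in>R. p \<preceq> x"
  shows "directed D (\<sqsubseteq>) ((\<lambda>x. ival p x) ` R)" "(\<lambda>x. ival p x) ` R \<subseteq> {z\<in>D. l z = p}"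
    "r ` (\<lambda>x. ival p x) ` R = R"
proof -
  have "p \<in> M" using R p max_order_in_max unfolding filtered_def by blast
  then have mono: "ival p x \<sqsubseteq> ival p y" if "x \<in> R" "y \<in> R" "y \<preceq> x" for x y
    using that p ival_le_iff max_order_refl by blast
  show "directed D (\<sqsubseteq>) ((\<lambda>x. ival p x) ` R)"
    using R ival p mono directed_image[of M "(\<preceq>)\<inverse>\<inverse>" R "\<lambda>x. ival p x" D "(\<sqsubseteq>)"] by auto
  show "(\<lambda>x. ival p x) ` R \<subseteq> {z\<in>D. l z = p}" "r ` (\<lambda>x. ival p x) ` R = R"
    using ival p by (force simp: image_image)+
qed

(* The infimum is the right endpoint of the supremum of the intervals [p, x], x \<in> R; by
   axiom (iii) it does not depend on the chosen lower bound p. *)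

lemma bounded_filtered_has_inf:
  assumes R: "filtered M (\<preceq>) R" and p: "\<forall>x\<in>R. p \<preceq> x"
  shows "\<exists>b. is_inf M (\<preceq>) R b"
proof -
  define T where "T p' = (\<lambda>x. ival p' x) ` R" for p'
  note T = left_fibre_ival_image[OF R, folded T_def]
  obtain t where t: "is_sup D (\<sqsubseteq>) (T p) t" using dcpo_has_sup T[OF p] by blast
  have "is_inf M (\<preceq>) R (r t)" unfolding is_inf_def
  proof (intro conjI ballI impI)
    show "r t \<in> M" using dual.l_in_max is_sup_in[OF t] by blast
    fix x assume x: "x \<in> R"
    then have "ival p x \<sqsubseteq> t" using t unfolding is_sup_def T_def by blast
    then show "r t \<preceq> x"
      using le_iff_endpoints[of "ival p x" t] ival[of p x] p x is_sup_in[OF t] by auto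
  next
    fix p' assume p': "p' \<in> M" "\<forall>x\<in>R. p' \<preceq> x"
    obtain t' where t': "is_sup D (\<sqsubseteq>) (T p') t'" using dcpo_has_sup T[OF p'(2)] by blast
    have "p \<in> M" using R p max_order_in_max unfolding filtered_def by blast
    note fibre = sup_in_left_fibre[OF p'(1) T(1)[OF p'(2)] T(2)[OF p'(2)] t']
    have "r ` T p = r ` T p'" using T(3)[OF p] T(3)[OF p'(2)] by simp
    then have "r t = r t'"
      using fibre[THEN conjunct2, rule_format, OF \<open>p \<in> M\<close> conjI[OF T(1)[OF p] conjI[OF T(2)[OF p] conjI[OF t]]]]
      by simp
    then show "p' \<preceq> r t" using fibre is_sup_in[OF t'] unfolding max_order_def by auto
  qed
  then show ?thesis by blast
qed

end

section \<open>Suprema and the way-below relation on maximal elements\<close>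

context interval_dom
begin

lemma bounded_directed_has_sup:
  "directed M (\<preceq>) L \<Longrightarrow> \<forall>x\<in>L. x \<preceq> u \<Longrightarrow> \<exists>a. is_sup M (\<preceq>) L a"
  using dual.bounded_filtered_has_inf[of L u,
      unfolded max_order_swap filtered_conversep is_inf_conversep, unfolded conversep_iff] .

lemma filtered_r_image: "directed D (\<sqsubseteq>) S \<Longrightarrow> filtered M (\<preceq>) (r ` S)"
  using dual.directed_l_image unfolding max_order_swap directed_conversep .

lemma is_sup_endpoints:
  assumes S: "directed D (\<sqsubseteq>) S" and s: "is_sup D (\<sqsubseteq>) S s"
  shows "is_sup M (\<preceq>) (l ` S) (l s)" "is_inf M (\<preceq>) (r ` S) (r s)"
proof -
  have sD: "s \<in> D" using is_sup_in[OF s] .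
  have SD: "S \<subseteq> D" using S unfolding directed_def by blast
  have below_s: "l x \<preceq> l s \<and> r s \<preceq> r x" if "x \<in> S" for x
    using s that SD sD le_iff_endpoints[of x s] unfolding is_sup_def by blast
  obtain a where a: "is_sup M (\<preceq>) (l ` S) a"
    using bounded_directed_has_sup[OF directed_l_image[OF S]] below_s by blast
  have a_below: "a \<preceq> r y" if "y \<in> S" for y
    using a l_le_r_of_directed[OF S _ that] dual.l_in_max[of y] that SD unfolding is_sup_def by blast
  obtain b where b: "is_inf M (\<preceq>) (r ` S) b"
    using bounded_filtered_has_inf[OF filtered_r_image[OF S]] a_below by blast
  have ab: "a \<preceq> b"
    using a b a_below unfolding is_sup_def is_inf_def by blast
  have "x \<sqsubseteq> ival a b" if "x \<in> S" for x
    using le_iff_endpoints[of x "ival a b"] ival[OF ab] a b that SD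
    unfolding is_sup_def is_inf_def by auto
  then have "s \<sqsubseteq> ival a b" using s ival[OF ab] unfolding is_sup_def by blast
  then have "l s \<preceq> a" "b \<preceq> r s" using le_iff_endpoints[of s "ival a b"] ival[OF ab] sD by auto
  moreover have "a \<preceq> l s" "r s \<preceq> b"
    using a b below_s l_in_max[OF sD] dual.l_in_max[OF sD] unfolding is_sup_def is_inf_def by auto
  ultimately have "l s = a" "r s = b" using max_order_antisym by blast+
  with a b show "is_sup M (\<preceq>) (l ` S) (l s)" "is_inf M (\<preceq>) (r ` S) (r s)" by simp_all
qed

lemma scott_continuous_l: "scott_continuous D (\<sqsubseteq>) M (\<preceq>) l"
  unfolding scott_continuous_def using l_in_max is_sup_endpoints(1) by blast

lemma dual_ival: "dual.ival b a = ival a b"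
  unfolding ival_def dual.ival_def by (rule arg_cong[where f = Eps]) (intro ext; blast)

lemma right_fibre_ival_image:
  assumes "directed M (\<preceq>) L" "\<forall>x\<in>L. x \<preceq> c"
  shows "directed D (\<sqsubseteq>) ((\<lambda>x. ival x c) ` L)" "(\<lambda>x. ival x c) ` L \<subseteq> {z\<in>D. r z = c}"
  using dual.left_fibre_ival_image[of L c,
      unfolded max_order_swap filtered_conversep, unfolded conversep_iff dual_ival] assms
  by simp_all

lemma right_fibre_ival_image_sup:
  assumes L: "directed M (\<preceq>) L" "is_sup M (\<preceq>) L c"
  shows "directed {z\<in>D. r z = c} (\<sqsubseteq>) ((\<lambda>x. ival x c) ` L)"
    "is_sup {z\<in>D. r z = c} (\<sqsubseteq>) ((\<lambda>x. ival x c) ` L) c"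
proof -
  let ?F = "{z\<in>D. r z = c}" and ?S = "(\<lambda>x. ival x c) ` L"
  have Lc: "\<forall>x\<in>L. x \<preceq> c" using L(2) unfolding is_sup_def by blast
  have cM: "c \<in> M" using is_sup_in[OF L(2)] .
  show "directed ?F (\<sqsubseteq>) ?S"
    using right_fibre_ival_image[OF L(1) Lc] unfolding directed_def by blast
  show "is_sup ?F (\<sqsubseteq>) ?S c" unfolding is_sup_def
  proof (intro conjI ballI impI)
    show "c \<in> ?F" using cM max_subset dual.l_max by auto
    show "y \<sqsubseteq> c" if "y \<in> ?S" for y
      using that ival_le_max_iff Lc cM max_order_refl by auto
    fix u assume u: "u \<in> ?F" "\<forall>y\<in>?S. y \<sqsubseteq> u"
    have "x \<preceq> l u" if "x \<in> L" for x
      using u that le_iff_endpoints[of "ival x c" u] ival[of x c] Lc by auto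
    then have "c \<preceq> l u" using L(2) l_in_max u unfolding is_sup_def by blast
    then show "c \<sqsubseteq> u"
      using le_iff_endpoints[of c u] u cM max_subset l_max dual.l_max max_order_refl by auto
  qed
qed

lemma way_below_of_ival_way_below_in_right_fibre:
  assumes ac: "a \<preceq> c" and wb: "way_below {z\<in>D. r z = c} (\<sqsubseteq>) (ival a c) c"
    and L: "directed M (\<preceq>) L" "is_sup M (\<preceq>) L c"
  shows "\<exists>x\<in>L. a \<preceq> x"
proof -
  have "c \<sqsubseteq> c" using poset_refl[OF poset] is_sup_in[OF L(2)] max_subset by blast
  then obtain x where "x \<in> L" "ival a c \<sqsubseteq> ival x c"
    using wb right_fibre_ival_image_sup[OF L] unfolding way_below_def by blast
  moreover have "x \<preceq> c" using L(2) \<open>x \<in> L\<close> unfolding is_sup_def by blast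
  ultimately show ?thesis using ival_le_iff[OF ac] by blast
qed

lemma ival_way_below_in_right_fibre:
  assumes ac: "a \<preceq> c"
    and H: "\<And>L. directed M (\<preceq>) L \<Longrightarrow> is_sup M (\<preceq>) L c \<Longrightarrow> \<exists>x\<in>L. a \<preceq> x"
  shows "way_below {z\<in>D. r z = c} (\<sqsubseteq>) (ival a c) c"
    (is "way_below ?F _ _ _")
  unfolding way_below_def
proof (intro conjI allI impI)
  have cM: "c \<in> M" using max_order_in_max[OF ac] by blast
  show "ival a c \<in> ?F" using ival[OF ac] by auto
  show "c \<in> ?F" using cM max_subset dual.l_max by auto
  fix S s assume S: "directed ?F (\<sqsubseteq>) S \<and> is_sup ?F (\<sqsubseteq>) S s \<and> c \<sqsubseteq> s"
  have SF: "S \<subseteq> ?F" using S unfolding directed_def by blast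
  have dS: "directed D (\<sqsubseteq>) S" by (rule directed_mono_carrier[OF conjunct1[OF S]]) blast
  have "s \<in> ?F" using S is_sup_in[of ?F "(\<sqsubseteq>)" S s] by blast
  then have sc: "s = c" using maxsetD[OF cM, of s] S by blast
  have Lc: "\<forall>x\<in>l ` S. x \<preceq> c" using SF max_orderI by fastforce
  obtain a' where a': "is_sup M (\<preceq>) (l ` S) a'"
    using bounded_directed_has_sup[OF directed_l_image[OF dS] Lc] by blast
  have a'c: "a' \<preceq> c" using a' Lc cM unfolding is_sup_def by blast
  have "t \<sqsubseteq> ival a' c" if "t \<in> S" for t
    using le_iff_endpoints[of t "ival a' c"] ival[OF a'c] that SF a' max_order_refl[OF cM]
    unfolding is_sup_def by auto
  then have "s \<sqsubseteq> ival a' c" using S ival[OF a'c] unfolding is_sup_def by auto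
  then have "c \<preceq> a'"
    using le_iff_endpoints[of c "ival a' c"] ival[OF a'c] sc l_max[OF cM] cM max_subset by auto
  then have "a' = c" using max_order_antisym a'c by blast
  then obtain t where "t \<in> S" "a \<preceq> l t" using H a' directed_l_image[OF dS] by blast
  then show "\<exists>t\<in>S. ival a c \<sqsubseteq> t"
    using le_iff_endpoints[of "ival a c" t] ival[OF ac] SF max_order_refl[OF cM] by auto
qed

lemma ival_way_below_in_right_fibre_iff:
  assumes "a \<preceq> c"
  shows "way_below {z\<in>D. r z = c} (\<sqsubseteq>) (ival a c) c \<longleftrightarrow>
    (\<forall>L. directed M (\<preceq>) L \<and> is_sup M (\<preceq>) L c \<longrightarrow> (\<exists>x\<in>L. a \<preceq> x))"
  using way_below_of_ival_way_below_in_right_fibre[OF assms]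
    ival_way_below_in_right_fibre[OF assms] by blast

lemma wwup_nonempty_iff:
  assumes x: "x \<in> D"
  shows "wwup D (\<sqsubseteq>) x \<noteq> {} \<longleftrightarrow> way_below M (\<preceq>) (l x) (r x)"
proof -
  have lr: "l x \<preceq> r x" using max_orderI[OF x] .
  have fibres: "(\<forall>y\<in>D. l y = l x \<and> y \<sqsubseteq> x \<longrightarrow> way_below {z\<in>D. r z = r y} (\<sqsubseteq>) y (r y)) \<longleftrightarrow>
      (\<forall>c. r x \<preceq> c \<longrightarrow> way_below {z\<in>D. r z = c} (\<sqsubseteq>) (ival (l x) c) c)"
  proof (intro iffI allI impI ballI)
    fix c assume H: "\<forall>y\<in>D. l y = l x \<and> y \<sqsubseteq> x \<longrightarrow> way_below {z\<in>D. r z = r y} (\<sqsubseteq>) y (r y)"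
      and c: "r x \<preceq> c"
    have "l x \<preceq> c" using max_order_trans[OF lr c] .
    moreover from this have "ival (l x) c \<sqsubseteq> x"
      using le_iff_endpoints[of "ival (l x) c" x] ival x c max_order_refl l_in_max by auto
    ultimately show "way_below {z\<in>D. r z = c} (\<sqsubseteq>) (ival (l x) c) c"
      using H ival[of "l x" c] by auto
  next
    fix y assume H: "\<forall>c. r x \<preceq> c \<longrightarrow> way_below {z\<in>D. r z = c} (\<sqsubseteq>) (ival (l x) c) c"
      and y: "y \<in> D" "l y = l x \<and> y \<sqsubseteq> x"
    have "r x \<preceq> r y" using y le_iff_endpoints[of y x] x by auto
    with H have "way_below {z\<in>D. r z = r y} (\<sqsubseteq>) (ival (l y) (r y)) (r y)" using y by auto
    then show "way_below {z\<in>D. r z = r y} (\<sqsubseteq>) y (r y)" using ival_endpoints[OF y(1)] by simp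
  qed
  have "wwup D (\<sqsubseteq>) x \<noteq> {} \<longleftrightarrow>
      (\<forall>c. r x \<preceq> c \<longrightarrow> (\<forall>L. directed M (\<preceq>) L \<and> is_sup M (\<preceq>) L c \<longrightarrow> (\<exists>z\<in>L. l x \<preceq> z)))"
    unfolding wwup_nonempty_iff_right_fibres[OF x] fibres
    using ival_way_below_in_right_fibre_iff max_order_trans[OF lr] by blast
  also have "\<dots> \<longleftrightarrow> way_below M (\<preceq>) (l x) (r x)"
    unfolding way_below_def using l_in_max[OF x] dual.l_in_max[OF x] by blast
  finally show ?thesis .
qed

end

context interval_dom
begin

lemma wwup_nonempty_iff_conversep:
  "x \<in> D \<Longrightarrow> wwup D (\<sqsubseteq>) x \<noteq> {} \<longleftrightarrow> way_below M (\<preceq>)\<inverse>\<inverse> (r x) (l x)"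
  using dual.wwup_nonempty_iff unfolding max_order_swap .

lemma way_below_max_iff_conversep:
  assumes "a \<in> M" "b \<in> M"
  shows "way_below M (\<preceq>) a b \<longleftrightarrow> way_below M (\<preceq>)\<inverse>\<inverse> b a"
proof -
  have "a \<preceq> b" if "way_below M (\<preceq>) a b \<or> way_below M (\<preceq>)\<inverse>\<inverse> b a"
    using that way_below_imp_le[OF poset_max_order, of a b]
      way_below_imp_le[of M "(\<preceq>)\<inverse>\<inverse>" b a] poset_max_order by auto
  moreover have "way_below M (\<preceq>) a b \<longleftrightarrow> way_below M (\<preceq>)\<inverse>\<inverse> b a" if ab: "a \<preceq> b"
    using wwup_nonempty_iff[of "ival a b"] wwup_nonempty_iff_conversep[of "ival a b"] ival[OF ab]
    by simp
  ultimately show ?thesis by blast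
qed

lemma l_way_below_of_way_below_max:
  assumes x: "x \<in> D" and p: "p \<in> M" and wb: "way_below D (\<sqsubseteq>) x p"
  shows "way_below M (\<preceq>) (l x) p"
proof -
  have lp: "l x \<preceq> p" using l_le_of_le_max[OF x p way_below_imp_le[OF poset wb]] .
  have "is_inf D (\<sqsubseteq>) {l x, p} (ival (l x) p)"
    using is_inf_endpoints[of "ival (l x) p"] ival[OF lp] by simp
  moreover have "p \<in> wwup D (\<sqsubseteq>) x \<inter> M" using wb p max_subset unfolding wwup_def by blast
  ultimately have "wwup D (\<sqsubseteq>) (ival (l x) p) \<noteq> {}" using wwup_nonempty_of_split[OF x] by blast
  then show ?thesis using wwup_nonempty_iff[of "ival (l x) p"] ival[OF lp] by simp
qed

end

context interval_dom
begin

lemma way_below_r_of_way_below_max: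
  assumes "x \<in> D" "p \<in> M" "way_below D (\<sqsubseteq>) x p"
  shows "way_below M (\<preceq>) p (r x)"
proof -
  have "way_below M (\<preceq>)\<inverse>\<inverse> (r x) p"
    using dual.l_way_below_of_way_below_max[OF assms] unfolding max_order_swap .
  then show ?thesis
    by (rule way_below_max_iff_conversep[OF assms(2) dual.l_in_max[OF assms(1)], THEN iffD2])
qed

lemma way_below_max_interpolate:
  assumes ab: "way_below M (\<preceq>) a b"
  shows "\<exists>e. way_below M (\<preceq>) a e \<and> way_below M (\<preceq>) e b"
proof -
  have "a \<preceq> b" using way_below_imp_le[OF poset_max_order ab] .
  note x = ival[OF this]
  have "wwup D (\<sqsubseteq>) (ival a b) \<noteq> {}" using wwup_nonempty_iff[of "ival a b"] x ab by simp
  then obtain y where y: "y \<in> D" "way_below D (\<sqsubseteq>) (ival a b) y" unfolding wwup_def by blast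
  have "way_below D (\<sqsubseteq>) (ival a b) (l y)"
    using way_below_le_trans[OF poset y(2) le_l[OF y(1)]] l_in_max[OF y(1)] max_subset by blast
  then show ?thesis
    using l_way_below_of_way_below_max way_below_r_of_way_below_max x l_in_max[OF y(1)] by metis
qed

lemma max_approx:
  assumes z: "z \<in> M"
  obtains S where "directed D (\<sqsubseteq>) S" "is_sup D (\<sqsubseteq>) S z" "\<forall>s\<in>S. way_below D (\<sqsubseteq>) s z"
    "directed M (\<preceq>) (l ` S)" "is_sup M (\<preceq>) (l ` S) z" "l ` S \<subseteq> wwdown M (\<preceq>) z"
    "filtered M (\<preceq>) (r ` S)" "is_inf M (\<preceq>) (r ` S) z" "r ` S \<subseteq> wwup M (\<preceq>) z"
proof -
  obtain S where S: "directed D (\<sqsubseteq>) S" "is_sup D (\<sqsubseteq>) S z" "\<forall>s\<in>S. way_below D (\<sqsubseteq>) s z"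
    using continuous_approx z max_subset by blast
  have SD: "S \<subseteq> D" using S(1) unfolding directed_def by blast
  have "l s \<in> wwdown M (\<preceq>) z \<and> r s \<in> wwup M (\<preceq>) z" if "s \<in> S" for s
  proof -
    have "s \<in> D" "way_below D (\<sqsubseteq>) s z" using that SD S(3) by blast+
    then show ?thesis
      using l_way_below_of_way_below_max[OF _ z] way_below_r_of_way_below_max[OF _ z]
        l_in_max dual.l_in_max
      unfolding wwdown_def wwup_def by blast
  qed
  then have "l ` S \<subseteq> wwdown M (\<preceq>) z" "r ` S \<subseteq> wwup M (\<preceq>) z" by blast+
  moreover have "is_sup M (\<preceq>) (l ` S) z" "is_inf M (\<preceq>) (r ` S) z"
    using is_sup_endpoints[OF S(1,2)] l_max[OF z] dual.l_max[OF z] by simp_all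
  ultimately show ?thesis
    using that[OF S directed_l_image[OF S(1)] _ _ filtered_r_image[OF S(1)]] by blast
qed

lemma continuous_poset_max: "continuous_poset M (\<preceq>)"
  unfolding continuous_poset_def
proof (intro conjI[OF poset_max_order] exI[of _ M, OF conjI[OF subset_refl]] ballI)
  fix x assume "x \<in> M"
  then obtain S where S: "directed M (\<preceq>) (l ` S)" "is_sup M (\<preceq>) (l ` S) x"
      "l ` S \<subseteq> wwdown M (\<preceq>) x"
    by (rule max_approx) blast
  moreover have "l ` S \<subseteq> M" using S(3) unfolding wwdown_def by blast
  ultimately show "\<exists>S\<subseteq>M \<inter> wwdown M (\<preceq>) x. directed M (\<preceq>) S \<and> is_sup M (\<preceq>) S x"
    by (intro exI[of _ "l ` S"] conjI) auto
qed

lemma wwup_max_filtered_inf: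
  assumes x: "x \<in> M"
  shows "filtered M (\<preceq>) (wwup M (\<preceq>) x)" "is_inf M (\<preceq>) (wwup M (\<preceq>) x) x"
proof -
  obtain S where S: "filtered M (\<preceq>) (r ` S)" "is_inf M (\<preceq>) (r ` S) x" "r ` S \<subseteq> wwup M (\<preceq>) x"
    using x by (rule max_approx) blast
  have below: "\<exists>s\<in>r ` S. s \<preceq> a" if "a \<in> wwup M (\<preceq>) x" for a
  proof -
    have "a \<in> M" "way_below M (\<preceq>) x a" using that unfolding wwup_def by blast+
    then have "way_below M (\<preceq>)\<inverse>\<inverse> a x" using way_below_max_iff_conversep[OF x] by blast
    then have "\<forall>S i. filtered M (\<preceq>) S \<and> is_inf M (\<preceq>) S i \<and> i \<preceq> x \<longrightarrow> (\<exists>s\<in>S. s \<preceq> a)"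
      unfolding way_below_conversep by (elim conjE)
    from this[rule_format, OF conjI[OF S(1) conjI[OF S(2) max_order_refl[OF x]]]] show ?thesis .
  qed
  show "filtered M (\<preceq>) (wwup M (\<preceq>) x)" unfolding filtered_def
  proof (intro conjI ballI)
    show "wwup M (\<preceq>) x \<subseteq> M" unfolding wwup_def by blast
    show "wwup M (\<preceq>) x \<noteq> {}" using S unfolding filtered_def by blast
    fix a b assume "a \<in> wwup M (\<preceq>) x" "b \<in> wwup M (\<preceq>) x"
    then obtain s1 s2 where "s1 \<in> r ` S" "s1 \<preceq> a" "s2 \<in> r ` S" "s2 \<preceq> b" using below by blast
    moreover obtain s3 where "s3 \<in> r ` S" "s3 \<preceq> s1" "s3 \<preceq> s2"
      using S(1) calculation unfolding filtered_def by blast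
    ultimately show "\<exists>c\<in>wwup M (\<preceq>) x. c \<preceq> a \<and> c \<preceq> b"
      using S(3) max_order_trans by blast
  qed
  show "is_inf M (\<preceq>) (wwup M (\<preceq>) x) x" unfolding is_inf_def
  proof (intro conjI ballI impI)
    show "x \<in> M" by (fact x)
    show "x \<preceq> a" if "a \<in> wwup M (\<preceq>) x" for a
      using that way_below_imp_le[OF poset_max_order] unfolding wwup_def by blast
    show "u \<preceq> x" if "u \<in> M" "\<forall>a\<in>wwup M (\<preceq>) x. u \<preceq> a" for u
      using that S unfolding is_inf_def by blast
  qed
qed

lemma bicontinuous_max: "bicontinuous M (\<preceq>)"
  unfolding bicontinuous_def
proof (intro conjI ballI continuous_poset_max wwup_max_filtered_inf)
  fix x y assume x: "x \<in> M" and y: "y \<in> M"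
  show "way_below M (\<preceq>) x y \<longleftrightarrow>
      (\<forall>S i. filtered M (\<preceq>) S \<and> is_inf M (\<preceq>) S i \<and> i \<preceq> x \<longrightarrow> (\<exists>s\<in>S. s \<preceq> y))"
    unfolding way_below_max_iff_conversep[OF x y] way_below_conversep using x y by simp
qed

section \<open>The interval topology on maximal elements\<close>

lemma scott_open_l_vimage: "scott_open D (\<sqsubseteq>) {y\<in>D. l y \<in> wwup M (\<preceq>) c}"
  using scott_open_vimage[OF poset scott_continuous_l
      scott_open_wwup[OF poset_max_order way_below_max_interpolate]] .

end

context interval_dom
begin

lemma scott_open_r_vimage: "d \<in> M \<Longrightarrow> scott_open D (\<sqsubseteq>) {y\<in>D. r y \<in> wwdown M (\<preceq>) d}"
proof -
  assume d: "d \<in> M"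
  have eq: "wwup M (\<preceq>)\<inverse>\<inverse> d = wwdown M (\<preceq>) d"
    unfolding wwup_def wwdown_def using way_below_max_iff_conversep[OF _ d] by blast
  show ?thesis using dual.scott_open_l_vimage[of d] unfolding max_order_swap eq .
qed

lemma openin_interval_topology_trace:
  assumes U: "scott_open D (\<sqsubseteq>) U"
  shows "openin (interval_topology M (\<preceq>)) (U \<inter> M)"
proof -
  let ?B = "{wwup M (\<preceq>) a \<inter> wwdown M (\<preceq>) b | a b. a \<in> M \<and> b \<in> M}"
  have "U \<inter> M = \<Union>{G\<in>?B. G \<subseteq> U}"
  proof
    show "U \<inter> M \<subseteq> \<Union>{G\<in>?B. G \<subseteq> U}"
    proof
      fix z assume z: "z \<in> U \<inter> M"
      obtain S where S: "directed D (\<sqsubseteq>) S" "is_sup D (\<sqsubseteq>) S z" "\<forall>s\<in>S. way_below D (\<sqsubseteq>) s z"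
        using z by (elim IntE max_approx) blast
      then obtain s where s: "s \<in> S" "s \<in> U" using U z unfolding scott_open_def by blast
      have sD: "s \<in> D" using s S(1) unfolding directed_def by blast
      let ?G = "wwup M (\<preceq>) (l s) \<inter> wwdown M (\<preceq>) (r s)"
      have "?G \<in> ?B" using l_in_max[OF sD] dual.l_in_max[OF sD] by blast
      moreover have "z \<in> ?G"
        using l_way_below_of_way_below_max[OF sD _ S(3)[rule_format, OF s(1)]]
          way_below_r_of_way_below_max[OF sD _ S(3)[rule_format, OF s(1)]] z
        unfolding wwup_def wwdown_def by blast
      moreover have "?G \<subseteq> U"
      proof
        fix w assume w: "w \<in> ?G"
        then have "w \<in> M" "l s \<preceq> w" "w \<preceq> r s"
          using way_below_imp_le[OF poset_max_order] unfolding wwup_def wwdown_def by blast+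
        then have "s \<sqsubseteq> w" using le_max_iff[OF sD] by blast
        then show "w \<in> U" using U s \<open>w \<in> M\<close> max_subset unfolding scott_open_def by blast
      qed
      ultimately show "z \<in> \<Union>{G\<in>?B. G \<subseteq> U}" by blast
    qed
    show "\<Union>{G\<in>?B. G \<subseteq> U} \<subseteq> U \<inter> M" unfolding wwup_def by blast
  qed
  moreover have "openin (interval_topology M (\<preceq>)) (\<Union>{G\<in>?B. G \<subseteq> U})"
    unfolding interval_topology_def by (intro openin_Union topology_generated_by_Basis) blast
  ultimately show ?thesis by simp
qed

lemma interval_topology_eq_subtopology:
  "interval_topology M (\<preceq>) = subtopology (scott_topology D (\<sqsubseteq>)) M"
  unfolding topology_eq
proof (intro allI iffI)
  fix Q assume "openin (interval_topology M (\<preceq>)) Q"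
  then have "generate_topology_on {wwup M (\<preceq>) a \<inter> wwdown M (\<preceq>) b | a b. a \<in> M \<and> b \<in> M} Q"
    unfolding interval_topology_def openin_topology_generated_by_iff .
  then show "openin (subtopology (scott_topology D (\<sqsubseteq>)) M) Q"
  proof (rule generate_topology_on_coarsest[OF istopology_openin, rotated])
    fix G assume "G \<in> {wwup M (\<preceq>) a \<inter> wwdown M (\<preceq>) b | a b. a \<in> M \<and> b \<in> M}"
    then obtain a b where ab: "a \<in> M" "b \<in> M" "G = wwup M (\<preceq>) a \<inter> wwdown M (\<preceq>) b" by blast
    let ?V = "{y\<in>D. l y \<in> wwup M (\<preceq>) a} \<inter> {y\<in>D. r y \<in> wwdown M (\<preceq>) b}"
    have "openin (scott_topology D (\<sqsubseteq>)) ?V"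
      using scott_open_Int[OF scott_open_l_vimage scott_open_r_vimage[OF ab(2)]] by simp
    moreover have "G = ?V \<inter> M"
      using ab max_subset l_max dual.l_max unfolding wwup_def by auto
    ultimately show "openin (subtopology (scott_topology D (\<sqsubseteq>)) M) G"
      unfolding openin_subtopology by blast
  qed
next
  fix Q assume "openin (subtopology (scott_topology D (\<sqsubseteq>)) M) Q"
  then obtain U where "scott_open D (\<sqsubseteq>) U" "Q = U \<inter> M" unfolding openin_subtopology by auto
  then show "openin (interval_topology M (\<preceq>)) Q" using openin_interval_topology_trace by simp
qed

lemma compactin_max_interval:
  assumes "a \<in> M" "b \<in> M"
  shows "compactin (interval_topology M (\<preceq>)) {z\<in>M. a \<preceq> z \<and> z \<preceq> b}"
proof (cases "a \<preceq> b")
  case False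
  then have empty: "{z\<in>M. a \<preceq> z \<and> z \<preceq> b} = {}" using max_order_trans by blast
  show ?thesis unfolding empty by (rule compactin_empty)
next
  case True
  then have "{z\<in>M. a \<preceq> z \<and> z \<preceq> b} = {y\<in>M. ival a b \<sqsubseteq> y}" using ival_le_max_iff by blast
  moreover have "scott_compact D (\<sqsubseteq>) {y\<in>M. ival a b \<sqsubseteq> y}"
    using scott_compact_above ival[OF True] by blast
  ultimately show ?thesis
    unfolding interval_topology_eq_subtopology compactin_subtopology compactin_scott_topology_iff
    by auto
qed

lemma globally_hyperbolic_max: "globally_hyperbolic M (\<preceq>)"
  unfolding globally_hyperbolic_def using bicontinuous_max compactin_max_interval by blast

end

lemma IN_arrow_maxset:
  assumes "interval_domain D le l r" "interval_domain E le' l' r'" "IN_arrow D le l r E le' l' r' f"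
    and p: "p \<in> maxset D le"
  shows "f p \<in> maxset E le'"
proof -
  interpret A: interval_dom D le l r by (rule interval_dom.intro) fact
  interpret B: interval_dom E le' l' r' by (rule interval_dom.intro) fact
  have "p \<in> D" using p A.max_subset by blast
  then have "f p \<in> E" "f (l p) = l' (f p)"
    using assms(3) unfolding IN_arrow_def scott_continuous_def by auto
  then show ?thesis using A.l_max[OF p] B.l_in_max by metis
qed

lemma G_arrow_max_map:
  assumes "interval_domain D le l r" "interval_domain E le' l' r'"
    and f: "IN_arrow D le l r E le' l' r' f"
  shows "G_arrow (maxset D le) (max_order D l r) (maxset E le') (max_order E l' r') (max_map D le f)"
proof -
  interpret A: interval_dom D le l r by (rule interval_dom.intro) fact
  interpret B: interval_dom E le' l' r' by (rule interval_dom.intro) fact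
  have sc: "scott_continuous D le E le' f" using f unfolding IN_arrow_def by blast
  have maps: "f \<in> maxset D le \<rightarrow> maxset E le'" using IN_arrow_maxset[OF assms] by blast
  have mono: "max_order E l' r' (f x) (f y)" if xy: "max_order D l r x y" for x y
  proof -
    obtain z where "z \<in> D" "l z = x" "r z = y" using xy unfolding max_order_def by blast
    then show ?thesis using f unfolding IN_arrow_def scott_continuous_def max_order_def by force
  qed
  have "continuous_map (subtopology (scott_topology D le) (maxset D le))
      (subtopology (scott_topology E le') (maxset E le')) f"
    using maps
    by (intro continuous_map_into_subtopology continuous_map_from_subtopology
        continuous_map_scott_topology[OF A.poset sc]) auto
  then show ?thesis
    unfolding G_arrow_def A.interval_topology_eq_subtopology B.interval_topology_eq_subtopology
      max_map_def
    using maps mono by (simp add: restrict_Pi_cancel)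
qed

lemma max_map_comp:
  assumes "interval_domain D le l r" "interval_domain E le' l' r'" "IN_arrow D le l r E le' l' r' f"
  shows "max_map D le (g \<circ> f) = compose (maxset D le) (max_map E le' g) (max_map D le f)"
  using IN_arrow_maxset[OF assms] unfolding max_map_def compose_def by auto

theorem mainTheorem15:
  shows "(\<forall>(D::'a set) le l r. interval_domain D le l r \<longrightarrow>
            globally_hyperbolic (maxset D le) (max_order D l r))
       \<and> (\<forall>(D::'a set) le l r (E::'b set) le' l' r' f.
            interval_domain D le l r \<and> interval_domain E le' l' r' \<and> IN_arrow D le l r E le' l' r' f \<longrightarrow>
            G_arrow (maxset D le) (max_order D l r) (maxset E le') (max_order E l' r') (max_map D le f))
       \<and> (\<forall>(D::'a set) le l r. interval_domain D le l r \<longrightarrow>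
            max_map D le (\<lambda>x. x) = restrict (\<lambda>x. x) (maxset D le))
       \<and> (\<forall>(D::'a set) le l r (E::'b set) le' l' r' (F::'c set) le'' l'' r'' f g.
            interval_domain D le l r \<and> interval_domain E le' l' r' \<and> interval_domain F le'' l'' r''
            \<and> IN_arrow D le l r E le' l' r' f \<and> IN_arrow E le' l' r' F le'' l'' r'' g \<longrightarrow>
            max_map D le (g \<circ> f) = compose (maxset D le) (max_map E le' g) (max_map D le f))"
proof (intro conjI allI impI)
  fix D :: "'a set" and le l r
  assume "interval_domain D le l r"
  then show "globally_hyperbolic (maxset D le) (max_order D l r)"
    by (intro interval_dom.globally_hyperbolic_max interval_dom.intro)
next
  fix D :: "'a set" and le l r and E :: "'b set" and le' l' r' f
  assume "interval_domain D le l r \<and> interval_domain E le' l' r' \<and> IN_arrow D le l r E le' l' r' f"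
  then show "G_arrow (maxset D le) (max_order D l r) (maxset E le') (max_order E l' r') (max_map D le f)"
    using G_arrow_max_map by blast
next
  fix D :: "'a set" and le l r
  show "max_map D le (\<lambda>x. x) = restrict (\<lambda>x. x) (maxset D le)"
    unfolding max_map_def ..
next
  fix D :: "'a set" and le l r and E :: "'b set" and le' l' r' and F :: "'c set" and le'' l'' r'' f g
  assume "interval_domain D le l r \<and> interval_domain E le' l' r' \<and> interval_domain F le'' l'' r''
    \<and> IN_arrow D le l r E le' l' r' f \<and> IN_arrow E le' l' r' F le'' l'' r'' g"
  then show "max_map D le (g \<circ> f) = compose (maxset D le) (max_map E le' g) (max_map D le f)"
    using max_map_comp by blast
qed

end
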